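(* Let $n\ge1$. The distributive skeleton functor $\mathfrak S\colon\mathsf{PMV}_n\to\mathsf{DL}$ is dual to the forgetful functor $\mathsf U\colon\mathcal X_n\to\mathsf{Priest}$. That is, there is a natural isomorphism $$D\circ\mathfrak S\cong\mathsf U\circ D_n.$$ Its component at $\mathbf A$ is the order-isomorphism and homeomorphism $$\mathsf{PMV}_n(\mathbf A,\mathbf{P\L}_n)\to\mathsf{DL}(\mathfrak S(\mathbf A),\mathbf 2),\qquad u\mapsto u|_{\mathfrak S(\mathbf A)}.$$
   Context: For $n\ge 1$, the algebra $\mathbf{P\L}_n=\langle\{0,\tfrac1n,\dots,1\},\min,\max,\odot,\oplus,0,1\rangle$ has $x\odot y=\max\{0,x+y-1\}$ and $x\oplus y=\min\{1,x+y\}$. $\mathsf{PMV}_n$ is the variety it generates. - $\mathcal S_n$ is the set of subalgebras $\mathbf R$ of $\mathbf{P\L}_n^2$ with $\{(x,y):x=0\text{ or }y=1\}\subseteq\mathbf R\subseteq\{(x,y):x\le y\}$. - $\mathcal X_n$ is the category of topological structures isomorphic to closed substructures of nonempty powers of $\langle\{0,\tfrac1n,\dots,1\},\mathcal S_n,\text{discrete}\rangle$, with continuous relation-preserving maps as morphisms. - $D_n\colon\mathsf{PMV}_n\to\mathcal X_n$ sends $\mathbf A$ to $\mathsf{PMV}_n(\mathbf A,\mathbf{P\L}_n)$ with pointwise relations and the subspace topology of the product topology. On morphisms it acts by precomposition. - $\mathsf{DL}$ is the category of bounded distributive lattices and $\mathsf{Priest}$ the category of Priestley spaces. - $D\colon\mathsf{DL}\to\mathsf{Priest}$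 is Priestley duality: $D(\mathbf L)=\mathsf{DL}(\mathbf L,\mathbf 2)$ with pointwise order and product topology, where $\mathbf 2$ is the two-element lattice. - Every $\mathbf X\in\mathcal X_n$ has an underlying Priestley space $\langle X,\le^{\mathbf X},\mathcal T\rangle$. The functor $\mathsf U$ sends $\mathbf X$ to this space and each morphism to itself. - The distributive skeleton of $\mathbf A\in\mathsf{PMV}_n$ is the bounded distributive lattice $\mathfrak S(\mathbf A)=\langle\{a\in A:a\oplus a=a\},\wedge,\vee,0,1\rangle$. On a homomorphism $h$, $\mathfrak S h=h|_{\mathfrak S(\mathbf A)}$. *)

theory Defs
  imports "HOL-Analysis.Analysis"
begin

record 'a pmv_alg =
  pcarrier :: "'a set"
  pmeet :: "'a \<Rightarrow> 'a \<Rightarrow> 'a"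
  pjoin :: "'a \<Rightarrow> 'a \<Rightarrow> 'a"
  podot :: "'a \<Rightarrow> 'a \<Rightarrow> 'a"
  poplus :: "'a \<Rightarrow> 'a \<Rightarrow> 'a"
  pzero :: 'a
  pone :: 'a

definition is_alg :: "'a pmv_alg \<Rightarrow> bool" where
  "is_alg A \<longleftrightarrow> pzero A \<in> pcarrier A \<and> pone A \<in> pcarrier A \<and>
     (\<forall>x\<in>pcarrier A. \<forall>y\<in>pcarrier A.
        pmeet A x y \<in> pcarrier A \<and> pjoin A x y \<in> pcarrier A \<and>
        podot A x y \<in> pcarrier A \<and> poplus A x y \<in> pcarrier A)"

definition PL :: "nat \<Rightarrow> real pmv_alg" where
  "PL n = \<lparr> pcarrier = {real k / real n | k. k \<le> n},
            pmeet = min, pjoin = max,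
            podot = (\<lambda>x y. max 0 (x + y - 1)),
            poplus = (\<lambda>x y. min 1 (x + y)),
            pzero = 0, pone = 1 \<rparr>"

datatype pterm = Var nat | TMeet pterm pterm | TJoin pterm pterm
  | TOdot pterm pterm | TOplus pterm pterm | TZero | TOne

fun eval :: "'a pmv_alg \<Rightarrow> (nat \<Rightarrow> 'a) \<Rightarrow> pterm \<Rightarrow> 'a" where
  "eval A \<sigma> (Var i) = \<sigma> i"
| "eval A \<sigma> (TMeet s t) = pmeet A (eval A \<sigma> s) (eval A \<sigma> t)"
| "eval A \<sigma> (TJoin s t) = pjoin A (eval A \<sigma> s) (eval A \<sigma> t)"
| "eval A \<sigma> (TOdot s t) = podot A (eval A \<sigma> s) (eval A \<sigma> t)"
| "eval A \<sigma> (TOplus s t) = poplus A (eval A \<sigma> s) (eval A \<sigma> t)"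
| "eval A \<sigma> TZero = pzero A"
| "eval A \<sigma> TOne = pone A"

definition satisfies_eq :: "'a pmv_alg \<Rightarrow> pterm \<Rightarrow> pterm \<Rightarrow> bool" where
  "satisfies_eq A s t \<longleftrightarrow> (\<forall>\<sigma>. range \<sigma> \<subseteq> pcarrier A \<longrightarrow> eval A \<sigma> s = eval A \<sigma> t)"

text \<open>Membership in PMV_n, the variety generated by P L_n (= models of all equations
  valid in P L_n, by Birkhoff's HSP theorem).\<close>
definition in_PMV :: "nat \<Rightarrow> 'a pmv_alg \<Rightarrow> bool" where
  "in_PMV n A \<longleftrightarrow> is_alg A \<and>
     (\<forall>s t. satisfies_eq (PL n) s t \<longrightarrow> satisfies_eq A s t)"

definition hom :: "'a pmv_alg \<Rightarrow> 'b pmv_alg \<Rightarrow> ('a \<Rightarrow> 'b) set" where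
  "hom A B = {h \<in> pcarrier A \<rightarrow>\<^sub>E pcarrier B.
      (\<forall>x\<in>pcarrier A. \<forall>y\<in>pcarrier A.
         h (pmeet A x y) = pmeet B (h x) (h y) \<and>
         h (pjoin A x y) = pjoin B (h x) (h y) \<and>
         h (podot A x y) = podot B (h x) (h y) \<and>
         h (poplus A x y) = poplus B (h x) (h y)) \<and>
      h (pzero A) = pzero B \<and> h (pone A) = pone B}"

text \<open>Distributive skeleton: carrier of S(A); its lattice operations are those of A.\<close>
definition skel :: "'a pmv_alg \<Rightarrow> 'a set" where
  "skel A = {a \<in> pcarrier A. poplus A a a = a}"

definition dlhom :: "'a pmv_alg \<Rightarrow> ('a \<Rightarrow> real) set" where
  "dlhom A = {f \<in> skel A \<rightarrow>\<^sub>E {0, 1}.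
      (\<forall>x\<in>skel A. \<forall>y\<in>skel A.
         f (pmeet A x y) = min (f x) (f y) \<and> f (pjoin A x y) = max (f x) (f y)) \<and>
      f (pzero A) = 0 \<and> f (pone A) = 1}"

definition Dn_top :: "nat \<Rightarrow> 'a pmv_alg \<Rightarrow> ('a \<Rightarrow> real) topology" where
  "Dn_top n A = subtopology
     (product_topology (\<lambda>_. discrete_topology (pcarrier (PL n))) (pcarrier A)) (hom A (PL n))"

definition D_top :: "'a pmv_alg \<Rightarrow> ('a \<Rightarrow> real) topology" where
  "D_top A = subtopology
     (product_topology (\<lambda>_. discrete_topology {0::real, 1}) (skel A)) (dlhom A)"

definition eta :: "'a pmv_alg \<Rightarrow> ('a \<Rightarrow> real) \<Rightarrow> ('a \<Rightarrow> real)" where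
  "eta A u = restrict u (skel A)"

definition Dn_mor :: "'a pmv_alg \<Rightarrow> ('a \<Rightarrow> 'b) \<Rightarrow> ('b \<Rightarrow> real) \<Rightarrow> ('a \<Rightarrow> real)" where
  "Dn_mor A h u = restrict (u \<circ> h) (pcarrier A)"

definition DS_mor :: "'a pmv_alg \<Rightarrow> ('a \<Rightarrow> 'b) \<Rightarrow> ('b \<Rightarrow> real) \<Rightarrow> ('a \<Rightarrow> real)" where
  "DS_mor A h f = restrict (f \<circ> restrict h (skel A)) (skel A)"

end

theory Submission
  imports Defs
begin

text \<open>For every \<open>1 \<le> k \<le> n\<close> there is a constant-free unary term \<open>\<tau>\<^sub>k\<close> which on \<open>PL n\<close> is the
  indicator of \<open>x \<ge> k/n\<close>. As \<open>\<tau>\<^sub>k(x) \<oplus> \<tau>\<^sub>k(x) = \<tau>\<^sub>k(x)\<close> holds in \<open>PL n\<close>, every \<open>\<tau>\<^sub>k(a)\<close> lies in the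
  skeleton \<open>S(A)\<close>, and being constant-free, \<open>\<tau>\<^sub>k\<close> fixes the elements of \<open>S(A)\<close>. A lattice
  homomorphism \<open>f : S(A) \<rightarrow> 2\<close> thus assigns to each \<open>a\<close> the number \<open>r\<close> of \<open>k\<close> with \<open>f(\<tau>\<^sub>k a) = 1\<close>,
  and these \<open>k\<close> are exactly \<open>1, \<dots>, r\<close>. The map \<open>a \<mapsto> r/n\<close> is the unique homomorphism \<open>A \<rightarrow> PL n\<close>
  extending \<open>f\<close>: that it preserves \<open>\<oplus>\<close>, \<open>\<odot>\<close>, \<open>\<and>\<close>, \<open>\<or>\<close> follows from identities of \<open>PL n\<close> comparing
  \<open>\<tau>\<^sub>k(x \<oplus> y)\<close>, \<open>\<tau>\<^sub>k(x \<odot> y)\<close>, \<dots> with the \<open>\<tau>\<^sub>i(x)\<close> and \<open>\<tau>\<^sub>j(y)\<close>, which transfer to every member of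
  \<open>PMV n\<close>. The extension depends on only finitely many coordinates of \<open>f\<close>, so the inverse of
  restriction is continuous as well.\<close>

section \<open>Terms\<close>

fun subst_vars :: "pterm \<Rightarrow> pterm \<Rightarrow> pterm" where
  "subst_vars (Var i) S = S"
| "subst_vars (TMeet s t) S = TMeet (subst_vars s S) (subst_vars t S)"
| "subst_vars (TJoin s t) S = TJoin (subst_vars s S) (subst_vars t S)"
| "subst_vars (TOdot s t) S = TOdot (subst_vars s S) (subst_vars t S)"
| "subst_vars (TOplus s t) S = TOplus (subst_vars s S) (subst_vars t S)"
| "subst_vars TZero S = TZero"
| "subst_vars TOne S = TOne"

fun const_free :: "pterm \<Rightarrow> bool" where
  "const_free (Var i) = True"
| "const_free (TMeet s t) = (const_free s \<and> const_free t)"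
| "const_free (TJoin s t) = (const_free s \<and> const_free t)"
| "const_free (TOdot s t) = (const_free s \<and> const_free t)"
| "const_free (TOplus s t) = (const_free s \<and> const_free t)"
| "const_free TZero = False"
| "const_free TOne = False"

fun oplus_iter :: "nat \<Rightarrow> pterm \<Rightarrow> pterm" where
  "oplus_iter 0 t = t"
| "oplus_iter (Suc m) t = TOplus t (oplus_iter m t)"

fun odot_iter :: "nat \<Rightarrow> pterm \<Rightarrow> pterm" where
  "odot_iter 0 t = t"
| "odot_iter (Suc m) t = TOdot t (odot_iter m t)"

lemma eval_subst_vars: "eval A \<sigma> (subst_vars T S) = eval A (\<lambda>_. eval A \<sigma> S) T"
  by (induction T) auto

lemma const_free_subst_vars: "const_free T \<Longrightarrow> const_free S \<Longrightarrow> const_free (subst_vars T S)"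
  by (induction T) auto

lemma const_free_oplus_iter: "const_free t \<Longrightarrow> const_free (oplus_iter m t)"
  by (induction m) auto

lemma const_free_odot_iter: "const_free t \<Longrightarrow> const_free (odot_iter m t)"
  by (induction m) auto

lemma eval_closed: "is_alg A \<Longrightarrow> range \<sigma> \<subseteq> pcarrier A \<Longrightarrow> eval A \<sigma> t \<in> pcarrier A"
  by (induction t) (auto simp: is_alg_def)

lemma hom_eval:
  assumes "h \<in> hom A B" "range \<sigma> \<subseteq> pcarrier A" "is_alg A"
  shows "h (eval A \<sigma> t) = eval B (h \<circ> \<sigma>) t"
  using assms by (induction t) (auto simp: hom_def eval_closed)

lemma in_PMV_satisfies_eq:
  "in_PMV n A \<Longrightarrow> satisfies_eq (PL n) s t \<Longrightarrow> range \<sigma> \<subseteq> pcarrier A \<Longrightarrow> eval A \<sigma> s = eval A \<sigma> t"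
  unfolding in_PMV_def satisfies_eq_def by blast

section \<open>The chain \<open>PL n\<close>\<close>

lemma PL_simps [simp]:
  "pcarrier (PL n) = {real k / real n | k. k \<le> n}"
  "pmeet (PL n) = min" "pjoin (PL n) = max"
  "podot (PL n) = (\<lambda>x y. max 0 (x + y - 1))"
  "poplus (PL n) = (\<lambda>x y. min 1 (x + y))"
  "pzero (PL n) = 0" "pone (PL n) = 1"
  by (simp_all add: PL_def)

lemma PL_ops_frac:
  assumes "n \<ge> 1"
  shows "min 1 (real i / real n + real j / real n) = real (min n (i + j)) / real n"
    "max 0 (real i / real n + real j / real n - 1) = real (i + j - n) / real n"
    "min (real i / real n) (real j / real n) = real (min i j) / real n"
    "max (real i / real n) (real j / real n) = real (max i j) / real n"
  using assms by (auto simp: field_simps min_def max_def of_nat_diff)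

lemma frac_in_PL: "k \<le> n \<Longrightarrow> real k / real n \<in> pcarrier (PL n)"
  by auto

lemma is_alg_PL: "n \<ge> 1 \<Longrightarrow> is_alg (PL n)"
  unfolding is_alg_def
proof (intro conjI ballI)
  assume n: "n \<ge> 1"
  show "pzero (PL n) \<in> pcarrier (PL n)" "pone (PL n) \<in> pcarrier (PL n)"
    using frac_in_PL[of 0 n] frac_in_PL[of n n] n by simp_all
  fix x y assume "x \<in> pcarrier (PL n)" "y \<in> pcarrier (PL n)"
  then obtain i j where "i \<le> n" "j \<le> n" "x = real i / real n" "y = real j / real n" by auto
  then show "pmeet (PL n) x y \<in> pcarrier (PL n)" "pjoin (PL n) x y \<in> pcarrier (PL n)"
    "podot (PL n) x y \<in> pcarrier (PL n)" "poplus (PL n) x y \<in> pcarrier (PL n)"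
    using PL_ops_frac[OF n, of i j] frac_in_PL by simp_all
qed

lemma eval_oplus_iter_PL:
  assumes n: "n \<ge> 1" and t: "eval (PL n) \<sigma> t = real s / real n" and "s \<le> n"
  shows "eval (PL n) \<sigma> (oplus_iter m t) = real (min n (Suc m * s)) / real n"
proof (induction m)
  case (Suc m)
  have "min n (s + min n (Suc m * s)) = min n (Suc (Suc m) * s)"
    by (simp add: min_def)
  then show ?case using Suc t PL_ops_frac(1)[OF n] by simp
qed (use assms in simp)

lemma eval_odot_iter_PL:
  assumes n: "n \<ge> 1" and t: "eval (PL n) \<sigma> t = real s / real n" and "s \<le> n"
  shows "eval (PL n) \<sigma> (odot_iter m t) = real (Suc m * s - m * n) / real n"
proof (induction m)
  case (Suc m)
  have "s + (Suc m * s - m * n) - n = Suc (Suc m) * s - Suc m * n"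
    using \<open>s \<le> n\<close> by (cases "Suc m * s \<ge> m * n") (auto simp: algebra_simps)
  then show ?case using Suc t PL_ops_frac(2)[OF n] by simp
qed (use assms in simp)

section \<open>Threshold terms\<close>

lemma cut_step_arith:
  fixes n a i q d m :: nat
  assumes a: "0 < a" "a < n" and i: "i \<le> n"
    and q_def: "q = (n - 1) div a" and d_def: "d = n - q * a" and m_def: "m = n div d"
  shows "1 \<le> q" "1 \<le> m" "n mod d < a"
    "m * min n (q * i) - (m - 1) * n \<le> n"
    "n mod d < m * min n (q * i) - (m - 1) * n \<longleftrightarrow> a < i"
proof -
  have "q * a + (n - 1) mod a = n - 1" "(n - 1) mod a < a"
    using a div_mult_mod_eq[of "n - 1" a] by (simp_all add: q_def)
  then have qa: "q * a \<le> n - 1" "n - 1 < q * a + a" by linarith+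
  then show q1: "1 \<le> q" using a by (cases q) auto
  have d: "1 \<le> d" "d \<le> a" using qa a by (auto simp: d_def)
  then have "0 < n div d" using a by (simp add: div_greater_zero_iff)
  then show m1: "1 \<le> m" by (simp add: m_def)
  have md: "m * d \<le> n" "n mod d = n - m * d"
    by (simp_all add: m_def minus_div_mult_eq_mod[symmetric] mult.commute)
  show "n mod d < a" using d mod_less_divisor[of d n] by linarith
  have mn: "(m - 1) * n = m * n - n" "n \<le> m * n" using m1 by (simp_all add: diff_mult_distrib)
  show "m * min n (q * i) - (m - 1) * n \<le> n"
    using mn mult_le_mono2[of "min n (q * i)" n m] by linarith
  show "n mod d < m * min n (q * i) - (m - 1) * n \<longleftrightarrow> a < i"
  proof (cases "n \<le> q * i")
    case True
    then have "q * a < q * i" using qa a by linarith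
    then show ?thesis using True \<open>n mod d < a\<close> a mn by (simp add: min_def)
  next
    case False
    define X where "X = m * q * a"
    define Y where "Y = m * q * i"
    have "q * a \<le> n" using qa by linarith
    then have "X \<le> m * n" by (metis X_def mult.assoc mult_le_mono2)
    moreover have "m * d = m * n - X" using qa by (simp add: X_def d_def diff_mult_distrib2 algebra_simps)
    moreover have "m * min n (q * i) = Y" using False by (simp add: Y_def min_def algebra_simps)
    moreover have "a < i \<longleftrightarrow> X < Y" using m1 q1 by (simp add: X_def Y_def)
    ultimately show ?thesis using md mn by linarith
  qed
qed

text \<open>For \<open>a > 0\<close> the term \<open>(q x)\<^sup>m\<close>, with \<open>q, d, m\<close> as in \<open>cut_step_arith\<close>, carries the cut
  at \<open>a/n\<close> onto the cut at \<open>(n mod d)/n\<close>, and \<open>n mod d < a\<close>.\<close>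
lemma cut_term_exists:
  assumes n: "n \<ge> 1"
  shows "a < n \<Longrightarrow> \<exists>T. const_free T \<and>
           (\<forall>i\<le>n. 0 < eval (PL n) (\<lambda>_. real i / real n) T \<longleftrightarrow> a < i)"
proof (induction a rule: less_induct)
  case (less a)
  show ?case
  proof (cases "a = 0")
    case True
    then show ?thesis by (intro exI[of _ "Var 0"]) (auto simp: zero_less_divide_iff)
  next
    case False
    define q where "q = (n - 1) div a"
    define d where "d = n - q * a"
    define m where "m = n div d"
    note arith = cut_step_arith[OF _ less.prems _ q_def d_def m_def]
    obtain T where T: "const_free T"
      "\<And>i. i \<le> n \<Longrightarrow> 0 < eval (PL n) (\<lambda>_. real i / real n) T \<longleftrightarrow> n mod d < i"
      using less.IH[of "n mod d"] arith(3)[of 0] False less.prems by force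
    define G where "G = odot_iter (m - 1) (oplus_iter (q - 1) (Var 0))"
    have G: "eval (PL n) (\<lambda>_. real i / real n) G = real (m * min n (q * i) - (m - 1) * n) / real n"
      if i: "i \<le> n" for i
    proof -
      have "Suc (q - 1) = q" "Suc (m - 1) = m" using arith(1,2)[OF _ i] False by simp_all
      moreover have "eval (PL n) (\<lambda>_. real i / real n) (oplus_iter (q - 1) (Var 0))
          = real (min n (Suc (q - 1) * i)) / real n"
        using eval_oplus_iter_PL[OF n _ i] by simp
      ultimately show ?thesis
        using eval_odot_iter_PL[OF n _ min.cobounded1, of _ "oplus_iter (q - 1) (Var 0)" "q * i" "m - 1"]
        by (simp add: G_def)
    qed
    show ?thesis
    proof (intro exI[of _ "subst_vars T G"] conjI allI impI)
      show "const_free (subst_vars T G)"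
        using T(1) by (simp add: G_def const_free_subst_vars const_free_odot_iter const_free_oplus_iter)
      fix i assume i: "i \<le> n"
      show "0 < eval (PL n) (\<lambda>_. real i / real n) (subst_vars T G) \<longleftrightarrow> a < i"
        using T(2)[OF arith(4)[OF _ i]] arith(5)[OF _ i] False by (simp add: eval_subst_vars G[OF i])
    qed
  qed
qed

lemma threshold_term_exists:
  assumes n: "n \<ge> 1" and k: "1 \<le> k" "k \<le> n"
  shows "\<exists>T. const_free T \<and>
           (\<forall>i\<le>n. eval (PL n) (\<lambda>_. real i / real n) T = (if k \<le> i then 1 else 0))"
proof -
  have "k - 1 < n" using k by simp
  then obtain T where T: "const_free T"
      "\<And>i. i \<le> n \<Longrightarrow> 0 < eval (PL n) (\<lambda>_. real i / real n) T \<longleftrightarrow> k - 1 < i"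
    using cut_term_exists[OF n] by blast
  show ?thesis
  proof (intro exI[of _ "oplus_iter (n - 1) T"] conjI allI impI)
    show "const_free (oplus_iter (n - 1) T)" using T(1) by (rule const_free_oplus_iter)
    fix i assume i: "i \<le> n"
    have "eval (PL n) (\<lambda>_. real i / real n) T \<in> pcarrier (PL n)"
      by (rule eval_closed[OF is_alg_PL[OF n]]) (use frac_in_PL[OF i] in auto)
    then obtain j where j: "j \<le> n" "eval (PL n) (\<lambda>_. real i / real n) T = real j / real n"
      by auto
    have "eval (PL n) (\<lambda>_. real i / real n) (oplus_iter (n - 1) T) = real (min n (n * j)) / real n"
      using eval_oplus_iter_PL[OF n j(2,1), of "n - 1"] n by simp
    also have "\<dots> = (if k \<le> i then 1 else 0)"
      using T(2)[OF i] j(2) k n by (cases "j = 0") (auto simp: min_def)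
    finally show "eval (PL n) (\<lambda>_. real i / real n) (oplus_iter (n - 1) T) = (if k \<le> i then 1 else 0)" .
  qed
qed

definition threshold_term :: "nat \<Rightarrow> nat \<Rightarrow> pterm" where
  "threshold_term n k = (SOME T. const_free T \<and>
     (\<forall>i\<le>n. eval (PL n) (\<lambda>_. real i / real n) T = (if k \<le> i then 1 else 0)))"

lemma threshold_term:
  assumes "n \<ge> 1" "1 \<le> k" "k \<le> n"
  shows "const_free (threshold_term n k)"
    "i \<le> n \<Longrightarrow> eval (PL n) (\<lambda>_. real i / real n) (threshold_term n k) = (if k \<le> i then 1 else 0)"
  using someI_ex[OF threshold_term_exists[OF assms]] unfolding threshold_term_def by auto

section \<open>Identities of \<open>PL n\<close>\<close>

abbreviation x_var :: pterm where "x_var \<equiv> Var 0"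
abbreviation y_var :: pterm where "y_var \<equiv> Var (Suc 0)"

abbreviation threshold_of :: "nat \<Rightarrow> nat \<Rightarrow> pterm \<Rightarrow> pterm" where
  "threshold_of n k S \<equiv> subst_vars (threshold_term n k) S"

lemma satisfies_eq_PL_binaryI:
  assumes "\<And>i j. i \<le> n \<Longrightarrow> j \<le> n \<Longrightarrow>
     eval (PL n) (\<lambda>v. if v = 0 then real i / real n else real j / real n) s =
     eval (PL n) (\<lambda>v. if v = 0 then real i / real n else real j / real n) t"
    and "\<And>\<sigma> \<sigma>'. \<sigma> 0 = \<sigma>' 0 \<Longrightarrow> \<sigma> (Suc 0) = \<sigma>' (Suc 0) \<Longrightarrow> eval (PL n) \<sigma> s = eval (PL n) \<sigma>' s"
    and "\<And>\<sigma> \<sigma>'. \<sigma> 0 = \<sigma>' 0 \<Longrightarrow> \<sigma> (Suc 0) = \<sigma>' (Suc 0) \<Longrightarrow> eval (PL n) \<sigma> t = eval (PL n) \<sigma>' t"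
  shows "satisfies_eq (PL n) s t"
  unfolding satisfies_eq_def
proof (intro allI impI)
  fix \<sigma> :: "nat \<Rightarrow> real" assume "range \<sigma> \<subseteq> pcarrier (PL n)"
  then have "\<sigma> 0 \<in> pcarrier (PL n)" "\<sigma> (Suc 0) \<in> pcarrier (PL n)" by auto
  then obtain i j where ij: "i \<le> n" "j \<le> n" "\<sigma> 0 = real i / real n" "\<sigma> (Suc 0) = real j / real n"
    by auto
  let ?\<tau> = "\<lambda>v. if v = 0 then real i / real n else real j / real n"
  have "eval (PL n) \<sigma> s = eval (PL n) ?\<tau> s" by (rule assms(2)) (use ij in auto)
  also have "\<dots> = eval (PL n) ?\<tau> t" by (rule assms(1)[OF ij(1,2)])
  also have "\<dots> = eval (PL n) \<sigma> t" by (rule assms(3)) (use ij in auto)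
  finally show "eval (PL n) \<sigma> s = eval (PL n) \<sigma> t" .
qed

lemma PL_double_min_max:
  "min 1 (2 * real (min i j) / real n) = min (min 1 (2 * real i / real n)) (min 1 (2 * real j / real n))"
  "min 1 (2 * real (max i j) / real n) = max (min 1 (2 * real i / real n)) (min 1 (2 * real j / real n))"
proof -
  have mono: "2 * real i / real n \<le> 2 * real j / real n" if "i \<le> j" for i j
    using that by (simp add: divide_right_mono)
  show "min 1 (2 * real (min i j) / real n) = min (min 1 (2 * real i / real n)) (min 1 (2 * real j / real n))"
    using mono[of i j] mono[of j i] by (cases "i \<le> j") (auto simp: min_def)
  show "min 1 (2 * real (max i j) / real n) = max (min 1 (2 * real i / real n)) (min 1 (2 * real j / real n))"
    using mono[of i j] mono[of j i] by (cases "i \<le> j") (auto simp: min_def max_def)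
qed

context
  fixes n :: nat
  assumes n: "n \<ge> 1"
begin

lemma eval_threshold_term_PL:
  "1 \<le> k \<Longrightarrow> k \<le> n \<Longrightarrow> i \<le> n \<Longrightarrow>
    eval (PL n) (\<lambda>_. real i / real n) (threshold_term n k) = (if k \<le> i then 1 else 0)"
  using threshold_term(2)[OF n] by blast

lemma eval_threshold_term_PL_0_1:
  assumes "1 \<le> k" "k \<le> n"
  shows "eval (PL n) (\<lambda>_. 0) (threshold_term n k) = 0"
    "eval (PL n) (\<lambda>_. 1) (threshold_term n k) = 1"
  using eval_threshold_term_PL[OF assms, of 0] eval_threshold_term_PL[OF assms, of n] assms n by simp_all

lemmas PL_eval_simps = eval_subst_vars PL_ops_frac[OF n] eval_threshold_term_PL
  eval_threshold_term_PL_0_1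

lemma PL_threshold_idem:
  "1 \<le> k \<Longrightarrow> k \<le> n \<Longrightarrow> satisfies_eq (PL n) (TOplus (threshold_of n k x_var) (threshold_of n k x_var)) (threshold_of n k x_var)"
  by (rule satisfies_eq_PL_binaryI) (auto simp: PL_eval_simps)

lemma PL_threshold_antimono:
  "1 \<le> j \<Longrightarrow> j \<le> k \<Longrightarrow> k \<le> n \<Longrightarrow>
    satisfies_eq (PL n) (TMeet (threshold_of n k x_var) (threshold_of n j x_var)) (threshold_of n k x_var)"
  by (rule satisfies_eq_PL_binaryI) (auto simp: PL_eval_simps)

lemma PL_threshold_zero: "1 \<le> k \<Longrightarrow> k \<le> n \<Longrightarrow> satisfies_eq (PL n) (threshold_of n k TZero) TZero"
  by (rule satisfies_eq_PL_binaryI) (auto simp: PL_eval_simps)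

lemma PL_threshold_one: "1 \<le> k \<Longrightarrow> k \<le> n \<Longrightarrow> satisfies_eq (PL n) (threshold_of n k TOne) TOne"
  by (rule satisfies_eq_PL_binaryI) (auto simp: PL_eval_simps)

lemma PL_threshold_meet:
  "1 \<le> k \<Longrightarrow> k \<le> n \<Longrightarrow>
    satisfies_eq (PL n) (threshold_of n k (TMeet x_var y_var)) (TMeet (threshold_of n k x_var) (threshold_of n k y_var))"
  by (rule satisfies_eq_PL_binaryI) (auto simp: PL_eval_simps)

lemma PL_threshold_join:
  "1 \<le> k \<Longrightarrow> k \<le> n \<Longrightarrow>
    satisfies_eq (PL n) (threshold_of n k (TJoin x_var y_var)) (TJoin (threshold_of n k x_var) (threshold_of n k y_var))"
  by (rule satisfies_eq_PL_binaryI) (auto simp: PL_eval_simps)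

lemma PL_threshold_oplus_ge_left:
  "1 \<le> k \<Longrightarrow> k \<le> n \<Longrightarrow>
    satisfies_eq (PL n) (TMeet (threshold_of n k (TOplus x_var y_var)) (threshold_of n k x_var)) (threshold_of n k x_var)"
  by (rule satisfies_eq_PL_binaryI) (auto simp: PL_eval_simps)

lemma PL_threshold_oplus_ge_right:
  "1 \<le> k \<Longrightarrow> k \<le> n \<Longrightarrow>
    satisfies_eq (PL n) (TMeet (threshold_of n k (TOplus x_var y_var)) (threshold_of n k y_var)) (threshold_of n k y_var)"
  by (rule satisfies_eq_PL_binaryI) (auto simp: PL_eval_simps)

lemma PL_threshold_oplus_ge:
  "1 \<le> i \<Longrightarrow> 1 \<le> j \<Longrightarrow> i \<le> n \<Longrightarrow> j \<le> n \<Longrightarrow> 1 \<le> k \<Longrightarrow> k \<le> n \<Longrightarrow> k \<le> i + j \<Longrightarrow>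
    satisfies_eq (PL n) (TMeet (threshold_of n k (TOplus x_var y_var)) (TMeet (threshold_of n i x_var) (threshold_of n j y_var)))
      (TMeet (threshold_of n i x_var) (threshold_of n j y_var))"
  by (rule satisfies_eq_PL_binaryI) (auto simp: PL_eval_simps)

lemma PL_threshold_oplus_le:
  "1 \<le> i \<Longrightarrow> i \<le> k \<Longrightarrow> k \<le> n \<Longrightarrow>
    satisfies_eq (PL n) (TMeet (threshold_of n k (TOplus x_var y_var)) (TJoin (threshold_of n i x_var) (threshold_of n (k + 1 - i) y_var)))
      (threshold_of n k (TOplus x_var y_var))"
  by (rule satisfies_eq_PL_binaryI) (auto simp: PL_eval_simps)

lemma PL_threshold_odot_ge:
  "1 \<le> i \<Longrightarrow> 1 \<le> j \<Longrightarrow> i \<le> n \<Longrightarrow> j \<le> n \<Longrightarrow> 1 \<le> k \<Longrightarrow> k \<le> n \<Longrightarrow> k + n \<le> i + j \<Longrightarrow>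
    satisfies_eq (PL n) (TMeet (threshold_of n k (TOdot x_var y_var)) (TMeet (threshold_of n i x_var) (threshold_of n j y_var)))
      (TMeet (threshold_of n i x_var) (threshold_of n j y_var))"
  by (rule satisfies_eq_PL_binaryI) (auto simp: PL_eval_simps)

lemma PL_threshold_odot_le_left:
  "1 \<le> k \<Longrightarrow> k \<le> n \<Longrightarrow>
    satisfies_eq (PL n) (TMeet (threshold_of n k (TOdot x_var y_var)) (threshold_of n k x_var)) (threshold_of n k (TOdot x_var y_var))"
  by (rule satisfies_eq_PL_binaryI) (auto simp: PL_eval_simps)

lemma PL_threshold_odot_le_right:
  "1 \<le> k \<Longrightarrow> k \<le> n \<Longrightarrow>
    satisfies_eq (PL n) (TMeet (threshold_of n k (TOdot x_var y_var)) (threshold_of n k y_var)) (threshold_of n k (TOdot x_var y_var))"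
  by (rule satisfies_eq_PL_binaryI) (auto simp: PL_eval_simps)

lemma PL_threshold_odot_le:
  "1 \<le> i \<Longrightarrow> 1 \<le> j \<Longrightarrow> i \<le> n \<Longrightarrow> j \<le> n \<Longrightarrow> 1 \<le> k \<Longrightarrow> k \<le> n \<Longrightarrow> i + j = k + n + 1 \<Longrightarrow>
    satisfies_eq (PL n) (TMeet (threshold_of n k (TOdot x_var y_var)) (TJoin (threshold_of n i x_var) (threshold_of n j y_var)))
      (threshold_of n k (TOdot x_var y_var))"
  by (rule satisfies_eq_PL_binaryI) (auto simp: PL_eval_simps)

lemma PL_double_meet:
  "satisfies_eq (PL n) (TOplus (TMeet x_var y_var) (TMeet x_var y_var)) (TMeet (TOplus x_var x_var) (TOplus y_var y_var))"
  by (rule satisfies_eq_PL_binaryI) (auto simp: PL_eval_simps PL_double_min_max)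

lemma PL_double_join:
  "satisfies_eq (PL n) (TOplus (TJoin x_var y_var) (TJoin x_var y_var)) (TJoin (TOplus x_var x_var) (TOplus y_var y_var))"
  by (rule satisfies_eq_PL_binaryI) (auto simp: PL_eval_simps PL_double_min_max)

lemma PL_meet_idem: "satisfies_eq (PL n) (TMeet x_var x_var) x_var"
  and PL_join_idem: "satisfies_eq (PL n) (TJoin x_var x_var) x_var"
  and PL_double_zero: "satisfies_eq (PL n) (TOplus TZero TZero) TZero"
  and PL_double_one: "satisfies_eq (PL n) (TOplus TOne TOne) TOne"
  by (rule satisfies_eq_PL_binaryI; auto simp: PL_eval_simps)+

text \<open>\<open>x \<oplus> \<dots> \<oplus> x\<close> (\<open>n\<close> summands) is Boolean in \<open>PL n\<close>; hence idempotents of \<open>\<oplus>\<close>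
  are idempotents of \<open>\<odot>\<close> in every member of the variety.\<close>
lemma PL_oplus_iter_odot_idem:
  "satisfies_eq (PL n) (TOdot (oplus_iter (n - 1) x_var) (oplus_iter (n - 1) x_var)) (oplus_iter (n - 1) x_var)"
proof (rule satisfies_eq_PL_binaryI)
  fix i j assume i: "i \<le> n" "j \<le> n"
  let ?\<tau> = "\<lambda>v. if v = 0 then real i / real n else real j / real n"
  have "eval (PL n) ?\<tau> (oplus_iter (n - 1) x_var) = real (min n (Suc (n - 1) * i)) / real n"
    by (rule eval_oplus_iter_PL[OF n]) (use i in auto)
  moreover have "Suc (n - 1) = n" using n by simp
  ultimately show "eval (PL n) ?\<tau> (TOdot (oplus_iter (n - 1) x_var) (oplus_iter (n - 1) x_var))
      = eval (PL n) ?\<tau> (oplus_iter (n - 1) x_var)"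
    using n by (cases "i = 0") (auto simp: min_def)
next
  fix \<sigma> \<sigma>' :: "nat \<Rightarrow> real" assume "\<sigma> 0 = \<sigma>' 0"
  moreover have "eval (PL n) \<sigma> (oplus_iter m x_var) = eval (PL n) \<sigma>' (oplus_iter m x_var)" for m
    using \<open>\<sigma> 0 = \<sigma>' 0\<close> by (induction m) auto
  ultimately show "eval (PL n) \<sigma> (TOdot (oplus_iter (n - 1) x_var) (oplus_iter (n - 1) x_var))
      = eval (PL n) \<sigma>' (TOdot (oplus_iter (n - 1) x_var) (oplus_iter (n - 1) x_var))"
     "eval (PL n) \<sigma> (oplus_iter (n - 1) x_var) = eval (PL n) \<sigma>' (oplus_iter (n - 1) x_var)" by auto
qed

end

section \<open>Members of \<open>PMV n\<close>\<close>

locale pmv_algebra =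
  fixes n :: nat and A :: "'a pmv_alg"
  assumes n: "n \<ge> 1" and in_PMV: "in_PMV n A"
begin

lemma is_alg: "is_alg A"
  using in_PMV by (simp add: in_PMV_def)

lemma closed:
  assumes "a \<in> pcarrier A" "b \<in> pcarrier A"
  shows "pmeet A a b \<in> pcarrier A" "pjoin A a b \<in> pcarrier A"
    "podot A a b \<in> pcarrier A" "poplus A a b \<in> pcarrier A"
  using is_alg assms by (auto simp: is_alg_def)

lemma zero_closed: "pzero A \<in> pcarrier A" and one_closed: "pone A \<in> pcarrier A"
  using is_alg by (auto simp: is_alg_def)

definition threshold :: "nat \<Rightarrow> 'a \<Rightarrow> 'a" where
  "threshold k a = eval A (\<lambda>_. a) (threshold_term n k)"

definition xy_val :: "'a \<Rightarrow> 'a \<Rightarrow> nat \<Rightarrow> 'a" where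
  "xy_val a b = (\<lambda>v. if v = 0 then a else b)"

lemma xy_val_simps [simp]: "xy_val a b 0 = a" "xy_val a b (Suc 0) = b"
  by (simp_all add: xy_val_def)

lemma PL_identity:
  "satisfies_eq (PL n) s t \<Longrightarrow> a \<in> pcarrier A \<Longrightarrow> b \<in> pcarrier A \<Longrightarrow>
    eval A (xy_val a b) s = eval A (xy_val a b) t"
  by (rule in_PMV_satisfies_eq[OF in_PMV]) (auto simp: xy_val_def)

lemma eval_xy_val [simp]:
  "eval A (xy_val a b) (threshold_of n k x_var) = threshold k a"
  "eval A (xy_val a b) (threshold_of n k y_var) = threshold k b"
  "eval A (xy_val a b) (threshold_of n k (TOplus x_var y_var)) = threshold k (poplus A a b)"
  "eval A (xy_val a b) (threshold_of n k (TOdot x_var y_var)) = threshold k (podot A a b)"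
  "eval A (xy_val a b) (threshold_of n k (TMeet x_var y_var)) = threshold k (pmeet A a b)"
  "eval A (xy_val a b) (threshold_of n k (TJoin x_var y_var)) = threshold k (pjoin A a b)"
  "eval A (xy_val a b) (threshold_of n k TZero) = threshold k (pzero A)"
  "eval A (xy_val a b) (threshold_of n k TOne) = threshold k (pone A)"
  by (simp_all add: eval_subst_vars threshold_def xy_val_def)

lemma threshold_closed: "a \<in> pcarrier A \<Longrightarrow> threshold k a \<in> pcarrier A"
  unfolding threshold_def by (rule eval_closed[OF is_alg]) auto

lemma skel_subset: "skel A \<subseteq> pcarrier A"
  by (auto simp: skel_def)

lemma threshold_in_skel: "a \<in> pcarrier A \<Longrightarrow> 1 \<le> k \<Longrightarrow> k \<le> n \<Longrightarrow> threshold k a \<in> skel A"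
  using PL_identity[OF PL_threshold_idem[OF n], of k a a] threshold_closed by (simp add: skel_def)

lemma zero_in_skel: "pzero A \<in> skel A" and one_in_skel: "pone A \<in> skel A"
  using PL_identity[OF PL_double_zero[OF n] zero_closed zero_closed]
    PL_identity[OF PL_double_one[OF n] zero_closed zero_closed] zero_closed one_closed
  by (auto simp: skel_def)

lemma skel_meet: "a \<in> skel A \<Longrightarrow> b \<in> skel A \<Longrightarrow> pmeet A a b \<in> skel A"
  using PL_identity[OF PL_double_meet[OF n], of a b] closed by (auto simp: skel_def)

lemma skel_join: "a \<in> skel A \<Longrightarrow> b \<in> skel A \<Longrightarrow> pjoin A a b \<in> skel A"
  using PL_identity[OF PL_double_join[OF n], of a b] closed by (auto simp: skel_def)

lemma skel_odot_idem:
  assumes "a \<in> skel A"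
  shows "podot A a a = a"
proof -
  have a: "a \<in> pcarrier A" "poplus A a a = a" using assms by (auto simp: skel_def)
  have "eval A (xy_val a a) (oplus_iter m x_var) = a" for m
    by (induction m) (auto simp: a(2))
  then show ?thesis using PL_identity[OF PL_oplus_iter_odot_idem[OF n] a(1) a(1)] by simp
qed

lemma eval_const_free_skel:
  assumes "a \<in> skel A" "const_free T"
  shows "eval A (\<lambda>_. a) T = a"
  using assms(2)
proof (induction T)
  case (TMeet s t)
  then show ?case using PL_identity[OF PL_meet_idem[OF n], of a a] assms(1) skel_subset by auto
next
  case (TJoin s t)
  then show ?case using PL_identity[OF PL_join_idem[OF n], of a a] assms(1) skel_subset by auto
next
  case (TOdot s t)
  then show ?case using skel_odot_idem[OF assms(1)] by simp
next
  case (TOplus s t)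
  then show ?case using assms(1) by (simp add: skel_def)
qed auto

lemma threshold_skel: "a \<in> skel A \<Longrightarrow> 1 \<le> k \<Longrightarrow> k \<le> n \<Longrightarrow> threshold k a = a"
  unfolding threshold_def by (rule eval_const_free_skel) (auto intro: threshold_term(1)[OF n])

lemma hom_threshold:
  assumes u: "u \<in> hom A (PL n)" and a: "a \<in> pcarrier A" "u a = real i / real n" "i \<le> n"
    and k: "1 \<le> k" "k \<le> n"
  shows "u (threshold k a) = (if k \<le> i then 1 else 0)"
proof -
  have "u (threshold k a) = eval (PL n) (u \<circ> (\<lambda>_. a)) (threshold_term n k)"
    unfolding threshold_def by (rule hom_eval[OF u _ is_alg]) (use a in auto)
  also have "u \<circ> (\<lambda>_. a) = (\<lambda>_. real i / real n)" using a by (simp add: o_def)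
  finally show ?thesis using eval_threshold_term_PL[OF n k a(3)] by simp
qed

end

section \<open>The rank of an element under a homomorphism \<open>S(A) \<rightarrow> 2\<close>\<close>

lemma downward_closed_card:
  fixes n :: nat
  assumes "\<And>j k. 1 \<le> j \<Longrightarrow> j \<le> k \<Longrightarrow> k \<le> n \<Longrightarrow> Q k \<Longrightarrow> Q j"
  shows "\<forall>j\<in>{1..n}. Q j \<longleftrightarrow> j \<le> card {k\<in>{1..n}. Q k}"
proof -
  let ?S = "{k\<in>{1..n}. Q k}"
  have "?S = {1..card ?S}"
  proof (cases "?S = {}")
    case False
    have "Max ?S \<in> ?S" using Max_in[OF _ False] by simp
    then have "?S = {1..Max ?S}" using assms by (auto intro: Max_ge)
    then show ?thesis by (metis card_atLeastAtMost diff_Suc_1)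
  qed simp
  then show ?thesis by (metis (no_types, lifting) atLeastAtMost_iff mem_Collect_eq)
qed

context pmv_algebra
begin

definition rank :: "('a \<Rightarrow> real) \<Rightarrow> 'a \<Rightarrow> nat" where
  "rank f a = card {k\<in>{1..n}. f (threshold k a) = 1}"

lemma rank_le: "rank f a \<le> n"
proof -
  have "rank f a \<le> card {1..n}"
    unfolding rank_def by (rule card_mono) auto
  then show ?thesis by simp
qed

lemma rank_eqI:
  assumes "p \<le> n" "\<And>k. 1 \<le> k \<Longrightarrow> k \<le> n \<Longrightarrow> f (threshold k a) = 1 \<longleftrightarrow> k \<le> p"
  shows "rank f a = p"
proof -
  have "{k\<in>{1..n}. f (threshold k a) = 1} = {1..p}" using assms by auto
  then show ?thesis by (simp add: rank_def)
qed

lemma dlhomD: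
  assumes "f \<in> dlhom A"
  shows "s \<in> skel A \<Longrightarrow> f s \<in> {0, 1}"
    "s \<in> skel A \<Longrightarrow> t \<in> skel A \<Longrightarrow> f (pmeet A s t) = min (f s) (f t)"
    "s \<in> skel A \<Longrightarrow> t \<in> skel A \<Longrightarrow> f (pjoin A s t) = max (f s) (f t)"
    "f (pzero A) = 0" "f (pone A) = 1"
  using assms unfolding dlhom_def by auto

lemma dlhom_le_if_meet_eq:
  "f \<in> dlhom A \<Longrightarrow> s \<in> skel A \<Longrightarrow> t \<in> skel A \<Longrightarrow> pmeet A s t = s \<Longrightarrow> f s \<le> f t"
  by (metis dlhomD(2) min.cobounded2)

lemma dlhom_le_if_meet_eq':
  "f \<in> dlhom A \<Longrightarrow> s \<in> skel A \<Longrightarrow> t \<in> skel A \<Longrightarrow> pmeet A t s = s \<Longrightarrow> f s \<le> f t"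
  by (metis dlhomD(2) min.cobounded1)

context
  fixes f assumes f: "f \<in> dlhom A"
begin

lemma dlhom_threshold:
  assumes a: "a \<in> pcarrier A" and k: "1 \<le> k" "k \<le> n"
  shows "f (threshold k a) = (if k \<le> rank f a then 1 else 0)"
proof -
  have "\<forall>k\<in>{1..n}. f (threshold k a) = 1 \<longleftrightarrow> k \<le> rank f a"
    unfolding rank_def
  proof (rule downward_closed_card)
    fix j k assume jk: "1 \<le> j" "j \<le> k" "k \<le> n" and "f (threshold k a) = 1"
    moreover have "pmeet A (threshold k a) (threshold j a) = threshold k a"
      using PL_identity[OF PL_threshold_antimono[OF n jk] a a] by simp
    then have "f (threshold k a) \<le> f (threshold j a)"
      using dlhom_le_if_meet_eq[OF f] threshold_in_skel[OF a] jk by simp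
    ultimately show "f (threshold j a) = 1" using dlhomD(1)[OF f threshold_in_skel[OF a]] jk by force
  qed
  then show ?thesis using dlhomD(1)[OF f threshold_in_skel[OF a k]] k by auto
qed

lemma dlhom_threshold_meet:
  assumes "a \<in> pcarrier A" "b \<in> pcarrier A" "1 \<le> i" "i \<le> n" "1 \<le> j" "j \<le> n"
  shows "f (pmeet A (threshold i a) (threshold j b)) = (if i \<le> rank f a \<and> j \<le> rank f b then 1 else 0)"
  using assms dlhomD(2)[OF f threshold_in_skel threshold_in_skel] dlhom_threshold by simp

lemma dlhom_threshold_join:
  assumes "a \<in> pcarrier A" "b \<in> pcarrier A" "1 \<le> i" "i \<le> n" "1 \<le> j" "j \<le> n"
  shows "f (pjoin A (threshold i a) (threshold j b)) = (if i \<le> rank f a \<or> j \<le> rank f b then 1 else 0)"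
  using assms dlhomD(3)[OF f threshold_in_skel threshold_in_skel] dlhom_threshold by simp

lemma dlhom_threshold_oplus_ge:
  assumes a: "a \<in> pcarrier A" and b: "b \<in> pcarrier A"
    and j: "1 \<le> j" "j \<le> n" and le: "j \<le> rank f a + rank f b"
  shows "f (threshold j (poplus A a b)) = 1"
proof -
  let ?c = "threshold j (poplus A a b)"
  have c: "?c \<in> skel A" using threshold_in_skel[OF closed(4)[OF a b] j] .
  have "1 \<le> f ?c"
  proof (cases "j \<le> rank f a")
    case True
    have "pmeet A ?c (threshold j a) = threshold j a"
      using PL_identity[OF PL_threshold_oplus_ge_left[OF n j] a b] by simp
    then show ?thesis using dlhom_le_if_meet_eq'[OF f threshold_in_skel[OF a j] c] dlhom_threshold[OF a j] True by simp
  next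
    case not_a: False
    show ?thesis
    proof (cases "j \<le> rank f b")
      case True
      have "pmeet A ?c (threshold j b) = threshold j b"
        using PL_identity[OF PL_threshold_oplus_ge_right[OF n j] a b] by simp
      then show ?thesis using dlhom_le_if_meet_eq'[OF f threshold_in_skel[OF b j] c] dlhom_threshold[OF b j] True by simp
    next
      case False
      define i where "i = rank f a"
      have i: "1 \<le> i" "i \<le> n" "1 \<le> j - i" "j - i \<le> n" "j \<le> i + (j - i)"
        using not_a False le j rank_le[of f a] by (auto simp: i_def)
      let ?s = "pmeet A (threshold i a) (threshold (j - i) b)"
      have "pmeet A ?c ?s = ?s"
        using PL_identity[OF PL_threshold_oplus_ge[OF n i(1,3,2,4) j i(5)] a b] by simp
      moreover have "?s \<in> skel A" using skel_meet threshold_in_skel a b i by simp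
      moreover have "f ?s = 1" using dlhom_threshold_meet[OF a b i(1-4)] le by (simp add: i_def)
      ultimately show ?thesis using dlhom_le_if_meet_eq'[OF f _ c] by fastforce
    qed
  qed
  then show ?thesis using dlhomD(1)[OF f c] by auto
qed

lemma dlhom_threshold_oplus_lt:
  assumes a: "a \<in> pcarrier A" and b: "b \<in> pcarrier A"
    and j: "1 \<le> j" "j \<le> n" and lt: "rank f a + rank f b < j"
  shows "f (threshold j (poplus A a b)) = 0"
proof -
  let ?c = "threshold j (poplus A a b)"
  define i where "i = rank f a + 1"
  have i: "1 \<le> i" "i \<le> j" "i \<le> n" "1 \<le> j + 1 - i" "j + 1 - i \<le> n"
    using lt j by (auto simp: i_def)
  let ?s = "pjoin A (threshold i a) (threshold (j + 1 - i) b)"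
  have c: "?c \<in> skel A" using threshold_in_skel[OF closed(4)[OF a b] j] .
  have "pmeet A ?c ?s = ?c"
    using PL_identity[OF PL_threshold_oplus_le[OF n i(1,2) j(2)] a b] by simp
  moreover have "?s \<in> skel A" using skel_join threshold_in_skel a b i by simp
  moreover have "f ?s = 0" using dlhom_threshold_join[OF a b i(1,3-5)] lt by (simp add: i_def)
  ultimately have "f ?c \<le> 0" using dlhom_le_if_meet_eq[OF f c] by fastforce
  then show ?thesis using dlhomD(1)[OF f c] by auto
qed

lemma dlhom_threshold_odot_ge:
  assumes a: "a \<in> pcarrier A" and b: "b \<in> pcarrier A"
    and j: "1 \<le> j" "j \<le> n" and le: "j + n \<le> rank f a + rank f b"
  shows "f (threshold j (podot A a b)) = 1"
proof -
  let ?c = "threshold j (podot A a b)"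
  define i where "i = rank f a"
  have i: "1 \<le> i" "1 \<le> j + n - i" "i \<le> n" "j + n - i \<le> n" "j + n \<le> i + (j + n - i)"
    using le j rank_le[of f a] rank_le[of f b] by (auto simp: i_def)
  let ?s = "pmeet A (threshold i a) (threshold (j + n - i) b)"
  have c: "?c \<in> skel A" using threshold_in_skel[OF closed(3)[OF a b] j] .
  have "pmeet A ?c ?s = ?s"
    using PL_identity[OF PL_threshold_odot_ge[OF n i(1-4) j i(5)] a b] by simp
  moreover have "?s \<in> skel A" using skel_meet threshold_in_skel a b i by simp
  moreover have "f ?s = 1" using dlhom_threshold_meet[OF a b i(1,3) i(2,4)] le by (simp add: i_def)
  ultimately have "1 \<le> f ?c" using dlhom_le_if_meet_eq'[OF f _ c] by fastforce
  then show ?thesis using dlhomD(1)[OF f c] by auto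
qed

lemma dlhom_threshold_odot_lt:
  assumes a: "a \<in> pcarrier A" and b: "b \<in> pcarrier A"
    and j: "1 \<le> j" "j \<le> n" and lt: "rank f a + rank f b < j + n"
  shows "f (threshold j (podot A a b)) = 0"
proof -
  let ?c = "threshold j (podot A a b)"
  have c: "?c \<in> skel A" using threshold_in_skel[OF closed(3)[OF a b] j] .
  have "f ?c \<le> 0"
  proof (cases "j \<le> rank f a")
    case False
    have "pmeet A ?c (threshold j a) = ?c"
      using PL_identity[OF PL_threshold_odot_le_left[OF n j] a b] by simp
    then show ?thesis using dlhom_le_if_meet_eq[OF f c threshold_in_skel[OF a j]] dlhom_threshold[OF a j] False by simp
  next
    case in_a: True
    show ?thesis
    proof (cases "j \<le> rank f b")
      case False
      have "pmeet A ?c (threshold j b) = ?c"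
        using PL_identity[OF PL_threshold_odot_le_right[OF n j] a b] by simp
      then show ?thesis using dlhom_le_if_meet_eq[OF f c threshold_in_skel[OF b j]] dlhom_threshold[OF b j] False by simp
    next
      case True
      define i where "i = rank f a + 1"
      have i: "1 \<le> i" "1 \<le> j + n - rank f a" "i \<le> n" "j + n - rank f a \<le> n"
        "i + (j + n - rank f a) = j + n + 1"
        using in_a True lt j by (auto simp: i_def)
      let ?s = "pjoin A (threshold i a) (threshold (j + n - rank f a) b)"
      have "pmeet A ?c ?s = ?c"
        using PL_identity[OF PL_threshold_odot_le[OF n i(1-4) j i(5)] a b] by simp
      moreover have "?s \<in> skel A" using skel_join threshold_in_skel a b i by simp
      moreover have "f ?s = 0" using dlhom_threshold_join[OF a b i(1,3) i(2,4)] lt by (simp add: i_def)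
      ultimately show ?thesis using dlhom_le_if_meet_eq[OF f c] by fastforce
    qed
  qed
  then show ?thesis using dlhomD(1)[OF f c] by auto
qed

lemma rank_oplus:
  assumes "a \<in> pcarrier A" "b \<in> pcarrier A"
  shows "rank f (poplus A a b) = min n (rank f a + rank f b)"
  by (rule rank_eqI) (use dlhom_threshold_oplus_ge[OF assms] dlhom_threshold_oplus_lt[OF assms] in fastforce)+

lemma rank_odot:
  assumes "a \<in> pcarrier A" "b \<in> pcarrier A"
  shows "rank f (podot A a b) = rank f a + rank f b - n"
proof (rule rank_eqI)
  show "rank f a + rank f b - n \<le> n" using rank_le[of f a] rank_le[of f b] by linarith
  fix k assume k: "1 \<le> k" "k \<le> n"
  show "f (threshold k (podot A a b)) = 1 \<longleftrightarrow> k \<le> rank f a + rank f b - n"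
  proof (cases "k + n \<le> rank f a + rank f b")
    case True
    then show ?thesis using dlhom_threshold_odot_ge[OF assms k] by simp
  next
    case False
    then have "\<not> k \<le> rank f a + rank f b - n" using k by linarith
    then show ?thesis using dlhom_threshold_odot_lt[OF assms k] False by simp
  qed
qed

lemma rank_meet:
  assumes a: "a \<in> pcarrier A" and b: "b \<in> pcarrier A"
  shows "rank f (pmeet A a b) = min (rank f a) (rank f b)"
proof (rule rank_eqI)
  fix k assume k: "1 \<le> k" "k \<le> n"
  have "threshold k (pmeet A a b) = pmeet A (threshold k a) (threshold k b)"
    using PL_identity[OF PL_threshold_meet[OF n k] a b] by simp
  then show "f (threshold k (pmeet A a b)) = 1 \<longleftrightarrow> k \<le> min (rank f a) (rank f b)"
    using dlhom_threshold_meet[OF a b k k] by simp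
qed (use rank_le[of f a] in simp)

lemma rank_join:
  assumes a: "a \<in> pcarrier A" and b: "b \<in> pcarrier A"
  shows "rank f (pjoin A a b) = max (rank f a) (rank f b)"
proof (rule rank_eqI)
  fix k assume k: "1 \<le> k" "k \<le> n"
  have "threshold k (pjoin A a b) = pjoin A (threshold k a) (threshold k b)"
    using PL_identity[OF PL_threshold_join[OF n k] a b] by simp
  then show "f (threshold k (pjoin A a b)) = 1 \<longleftrightarrow> k \<le> max (rank f a) (rank f b)"
    using dlhom_threshold_join[OF a b k k] by (simp add: le_max_iff_disj)
qed (use rank_le[of f a] rank_le[of f b] in simp)

lemma rank_zero: "rank f (pzero A) = 0"
proof (rule rank_eqI)
  fix k assume k: "1 \<le> k" "k \<le> n"
  have "threshold k (pzero A) = pzero A"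
    using PL_identity[OF PL_threshold_zero[OF n k] zero_closed zero_closed] by simp
  then show "f (threshold k (pzero A)) = 1 \<longleftrightarrow> k \<le> 0" using dlhomD(4)[OF f] k by simp
qed simp

lemma rank_one: "rank f (pone A) = n"
proof (rule rank_eqI)
  fix k assume k: "1 \<le> k" "k \<le> n"
  have "threshold k (pone A) = pone A"
    using PL_identity[OF PL_threshold_one[OF n k] one_closed one_closed] by simp
  then show "f (threshold k (pone A)) = 1 \<longleftrightarrow> k \<le> n" using dlhomD(5)[OF f] k by simp
qed simp

end

end

section \<open>The dual isomorphism\<close>

lemma continuous_map_discrete_topology_locally_constant:
  assumes "g \<in> topspace X \<rightarrow> S"
    and "\<And>x. x \<in> topspace X \<Longrightarrow> \<exists>U. openin X U \<and> x \<in> U \<and> (\<forall>y\<in>U. g y = g x)"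
  shows "continuous_map X (discrete_topology S) g"
  unfolding continuous_map_openin_preimage_eq
proof (intro conjI allI impI)
  show "g \<in> topspace X \<rightarrow> topspace (discrete_topology S)" using assms(1) by simp
  fix V
  show "openin X (topspace X \<inter> g -` V)"
  proof (subst openin_subopen, intro ballI)
    fix x assume x: "x \<in> topspace X \<inter> g -` V"
    then obtain U where "openin X U" "x \<in> U" "\<forall>y\<in>U. g y = g x" using assms(2) by blast
    moreover have "U \<subseteq> topspace X" using openin_subset[OF \<open>openin X U\<close>] .
    ultimately show "\<exists>T. openin X T \<and> x \<in> T \<and> T \<subseteq> topspace X \<inter> g -` V" using x by blast
  qed
qed

lemma topspace_Dn_top: "topspace (Dn_top n A) = hom A (PL n)"
  unfolding Dn_top_def by (auto simp: hom_def)

lemma topspace_D_top: "topspace (D_top A) = dlhom A"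
  unfolding D_top_def by (auto simp: dlhom_def)

context pmv_algebra
begin

lemma hom_frac:
  assumes "u \<in> hom A (PL n)" "a \<in> pcarrier A"
  obtains i where "i \<le> n" "u a = real i / real n"
  using assms by (auto simp: hom_def dest!: PiE_mem)

lemma eta_in_dlhom:
  assumes u: "u \<in> hom A (PL n)"
  shows "eta A u \<in> dlhom A"
  unfolding dlhom_def
proof (intro CollectI conjI ballI)
  have "u s \<in> {0, 1}" if s: "s \<in> skel A" for s
  proof -
    have sA: "s \<in> pcarrier A" and ss: "poplus A s s = s" using s by (auto simp: skel_def)
    obtain i where "u s = real i / real n" using hom_frac[OF u sA] .
    moreover have "u (poplus A s s) = min 1 (u s + u s)" using u sA by (simp add: hom_def)
    then have "min 1 (u s + u s) = u s" using ss by simp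
    ultimately show ?thesis by (auto simp: min_def split: if_splits)
  qed
  then show "eta A u \<in> skel A \<rightarrow>\<^sub>E {0, 1}" by (auto simp: eta_def)
  fix x y assume xy: "x \<in> skel A" "y \<in> skel A"
  then have "x \<in> pcarrier A" "y \<in> pcarrier A" using skel_subset by auto
  then show "eta A u (pmeet A x y) = min (eta A u x) (eta A u y)"
    "eta A u (pjoin A x y) = max (eta A u x) (eta A u y)"
    using u xy skel_meet skel_join by (simp_all add: eta_def hom_def)
next
  show "eta A u (pzero A) = 0" "eta A u (pone A) = 1"
    using u zero_in_skel one_in_skel by (simp_all add: eta_def hom_def)
qed

definition lift :: "('a \<Rightarrow> real) \<Rightarrow> 'a \<Rightarrow> real" where
  "lift f = restrict (\<lambda>a. real (rank f a) / real n) (pcarrier A)"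

lemma lift_in_hom:
  assumes f: "f \<in> dlhom A"
  shows "lift f \<in> hom A (PL n)"
  unfolding hom_def
proof (intro CollectI conjI ballI)
  show "lift f \<in> pcarrier A \<rightarrow>\<^sub>E pcarrier (PL n)"
    using frac_in_PL[OF rank_le] by (auto simp: lift_def)
  fix x y assume xy: "x \<in> pcarrier A" "y \<in> pcarrier A"
  note ops = closed[OF xy] xy
  show "lift f (pmeet A x y) = pmeet (PL n) (lift f x) (lift f y)"
    using ops by (simp add: lift_def rank_meet[OF f xy] PL_ops_frac[OF n])
  show "lift f (pjoin A x y) = pjoin (PL n) (lift f x) (lift f y)"
    using ops by (simp add: lift_def rank_join[OF f xy] PL_ops_frac[OF n])
  show "lift f (podot A x y) = podot (PL n) (lift f x) (lift f y)"
    using ops by (simp add: lift_def rank_odot[OF f xy] PL_ops_frac[OF n])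
  show "lift f (poplus A x y) = poplus (PL n) (lift f x) (lift f y)"
    using ops by (simp add: lift_def rank_oplus[OF f xy] PL_ops_frac[OF n])
next
  show "lift f (pzero A) = pzero (PL n)" "lift f (pone A) = pone (PL n)"
    using zero_closed one_closed n by (simp_all add: lift_def rank_zero[OF f] rank_one[OF f])
qed

lemma lift_eta:
  assumes u: "u \<in> hom A (PL n)"
  shows "lift (eta A u) = u"
proof
  fix a
  show "lift (eta A u) a = u a"
  proof (cases "a \<in> pcarrier A")
    case a: True
    obtain i where i: "i \<le> n" "u a = real i / real n" using hom_frac[OF u a] .
    have "rank (eta A u) a = i"
      using hom_threshold[OF u a i(2,1)] threshold_in_skel[OF a] i(1) by (intro rank_eqI) (auto simp: eta_def)
    then show ?thesis using a i by (simp add: lift_def)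
  next
    case False
    then show ?thesis using u by (simp add: lift_def hom_def PiE_def extensional_def)
  qed
qed

lemma eta_lift:
  assumes f: "f \<in> dlhom A"
  shows "eta A (lift f) = f"
proof
  fix a
  show "eta A (lift f) a = f a"
  proof (cases "a \<in> skel A")
    case a: True
    then have "a \<in> pcarrier A" using skel_subset by auto
    moreover have "rank f a = (if f a = 1 then n else 0)"
      using threshold_skel[OF a] dlhomD(1)[OF f a] by (intro rank_eqI) auto
    ultimately show ?thesis using a dlhomD(1)[OF f a] n by (auto simp: eta_def lift_def)
  next
    case False
    then show ?thesis using f by (simp add: eta_def dlhom_def PiE_def extensional_def)
  qed
qed

lemma bij_betw_eta: "bij_betw (eta A) (hom A (PL n)) (dlhom A)"
  by (rule bij_betw_byWitness[where f' = lift]) (auto simp: lift_eta eta_lift eta_in_dlhom lift_in_hom)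

lemma eta_le_iff:
  assumes u: "u \<in> hom A (PL n)" and v: "v \<in> hom A (PL n)"
  shows "(\<forall>a\<in>pcarrier A. u a \<le> v a) \<longleftrightarrow> (\<forall>a\<in>skel A. eta A u a \<le> eta A v a)"
proof
  assume "\<forall>a\<in>pcarrier A. u a \<le> v a"
  then show "\<forall>a\<in>skel A. eta A u a \<le> eta A v a" using skel_subset by (auto simp: eta_def)
next
  assume le: "\<forall>a\<in>skel A. eta A u a \<le> eta A v a"
  show "\<forall>a\<in>pcarrier A. u a \<le> v a"
  proof
    fix a assume a: "a \<in> pcarrier A"
    obtain i where i: "i \<le> n" "u a = real i / real n" using hom_frac[OF u a] .
    obtain i' where i': "i' \<le> n" "v a = real i' / real n" using hom_frac[OF v a] .
    have "i \<le> i'"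
    proof (cases "i = 0")
      case False
      then have k: "1 \<le> i" "i \<le> n" using i by simp_all
      have "u (threshold i a) \<le> v (threshold i a)" using le threshold_in_skel[OF a k] by (auto simp: eta_def)
      then show ?thesis using hom_threshold[OF u a i(2,1) k] hom_threshold[OF v a i'(2,1) k] by (auto split: if_splits)
    qed simp
    then show "u a \<le> v a" using i i' by (simp add: divide_right_mono)
  qed
qed

lemma continuous_map_eta: "continuous_map (Dn_top n A) (D_top A) (eta A)"
  unfolding D_top_def continuous_map_in_subtopology
proof
  show "eta A \<in> topspace (Dn_top n A) \<rightarrow> dlhom A" using eta_in_dlhom by (auto simp: topspace_Dn_top)
  show "continuous_map (Dn_top n A) (product_topology (\<lambda>_. discrete_topology {0, 1}) (skel A)) (eta A)"
    unfolding continuous_map_componentwise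
  proof (intro conjI ballI)
    show "eta A ` topspace (Dn_top n A) \<subseteq> extensional (skel A)" by (auto simp: eta_def)
    fix k assume k: "k \<in> skel A"
    have "continuous_map (Dn_top n A) (discrete_topology (pcarrier (PL n))) (\<lambda>u. u k)"
      unfolding Dn_top_def
      by (rule continuous_map_from_subtopology, rule continuous_map_product_projection) (use k skel_subset in auto)
    moreover have "(\<lambda>u. u k) \<in> topspace (Dn_top n A) \<rightarrow> {0, 1}"
      using eta_in_dlhom k by (auto simp: topspace_Dn_top dlhom_def eta_def)
    ultimately have "continuous_map (Dn_top n A) (subtopology (discrete_topology (pcarrier (PL n))) {0, 1}) (\<lambda>u. u k)"
      by (rule continuous_map_into_subtopology)
    moreover have "{0, 1} \<subseteq> pcarrier (PL n)" using frac_in_PL[of 0 n] frac_in_PL[of n n] n by simp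
    ultimately show "continuous_map (Dn_top n A) (discrete_topology {0, 1}) (\<lambda>u. eta A u k)"
      using k by (simp add: eta_def Int_absorb1)
  qed
qed

lemma continuous_map_lift: "continuous_map (D_top A) (Dn_top n A) lift"
  unfolding Dn_top_def continuous_map_in_subtopology
proof
  show "lift \<in> topspace (D_top A) \<rightarrow> hom A (PL n)" using lift_in_hom by (auto simp: topspace_D_top)
  show "continuous_map (D_top A) (product_topology (\<lambda>_. discrete_topology (pcarrier (PL n))) (pcarrier A)) lift"
    unfolding continuous_map_componentwise
  proof (intro conjI ballI)
    show "lift ` topspace (D_top A) \<subseteq> extensional (pcarrier A)" by (auto simp: lift_def)
    fix a assume a: "a \<in> pcarrier A"
    show "continuous_map (D_top A) (discrete_topology (pcarrier (PL n))) (\<lambda>f. lift f a)"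
    proof (rule continuous_map_discrete_topology_locally_constant)
      show "(\<lambda>f. lift f a) \<in> topspace (D_top A) \<rightarrow> pcarrier (PL n)"
        using a frac_in_PL[OF rank_le] by (auto simp: lift_def)
      fix f0 assume "f0 \<in> topspace (D_top A)"
      text \<open>\<open>lift f a\<close> only depends on the finitely many coordinates \<open>f (threshold k a)\<close>.\<close>
      let ?U = "\<Inter>k\<in>{1..n}. {f \<in> topspace (D_top A). f (threshold k a) \<in> {f0 (threshold k a)}}"
      have "openin (D_top A) ?U"
      proof (rule openin_INT2)
        fix k assume "k \<in> {1..n}"
        then have "threshold k a \<in> skel A" using threshold_in_skel[OF a] by auto
        then have "continuous_map (D_top A) (discrete_topology {0, 1}) (\<lambda>f. f (threshold k a))"
          unfolding D_top_def
          by (intro continuous_map_from_subtopology continuous_map_product_projection)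
        then show "openin (D_top A) {f \<in> topspace (D_top A). f (threshold k a) \<in> {f0 (threshold k a)}}"
          by (rule openin_continuous_map_preimage) (use \<open>f0 \<in> topspace (D_top A)\<close> \<open>threshold k a \<in> skel A\<close>
              in \<open>auto simp: topspace_D_top dlhom_def\<close>)
      qed (use n in auto)
      moreover have "f0 \<in> ?U" using \<open>f0 \<in> topspace (D_top A)\<close> by simp
      moreover have "lift f a = lift f0 a" if "f \<in> ?U" for f
      proof -
        have "{k\<in>{1..n}. f (threshold k a) = 1} = {k\<in>{1..n}. f0 (threshold k a) = 1}" using that by auto
        then show ?thesis by (simp add: lift_def rank_def)
      qed
      ultimately show "\<exists>U. openin (D_top A) U \<and> f0 \<in> U \<and> (\<forall>f\<in>U. lift f a = lift f0 a)" by blast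
    qed
  qed
qed

lemma homeomorphic_map_eta: "homeomorphic_map (Dn_top n A) (D_top A) (eta A)"
  unfolding homeomorphic_map_maps homeomorphic_maps_def
  by (intro exI[of _ lift] conjI continuous_map_eta continuous_map_lift)
    (auto simp: topspace_Dn_top topspace_D_top lift_eta eta_lift)

end

lemma hom_skel:
  assumes h: "h \<in> hom A B" and a: "a \<in> skel A"
  shows "h a \<in> skel B"
proof -
  have "a \<in> pcarrier A" "poplus A a a = a" using a by (auto simp: skel_def)
  moreover from this(1) have "h (poplus A a a) = poplus B (h a) (h a)" using h by (simp add: hom_def)
  ultimately show ?thesis using h by (auto simp: skel_def hom_def dest: PiE_mem)
qed

lemma eta_natural:
  assumes "h \<in> hom A B"
  shows "eta A (Dn_mor A h u) = DS_mor A h (eta B u)"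
  using hom_skel[OF assms] by (auto simp: eta_def Dn_mor_def DS_mor_def skel_def)

theorem theorem4p4:
  fixes n :: nat
  assumes "n \<ge> 1"
  shows
    "(\<forall>A :: 'a pmv_alg. in_PMV n A \<longrightarrow>
        bij_betw (eta A) (hom A (PL n)) (dlhom A) \<and>
        (\<forall>u\<in>hom A (PL n). \<forall>v\<in>hom A (PL n).
           (\<forall>a\<in>pcarrier A. u a \<le> v a) \<longleftrightarrow> (\<forall>a\<in>skel A. eta A u a \<le> eta A v a)) \<and>
        homeomorphic_map (Dn_top n A) (D_top A) (eta A))
   \<and>
    (\<forall>(A :: 'a pmv_alg) (B :: 'b pmv_alg) h. in_PMV n A \<longrightarrow> in_PMV n B \<longrightarrow> h \<in> hom A B \<longrightarrow>
        (\<forall>u\<in>hom B (PL n). eta A (Dn_mor A h u) = DS_mor A h (eta B u)))"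
proof (intro conjI allI impI ballI)
  fix A :: "'a pmv_alg"
  assume "in_PMV n A"
  then interpret pmv_algebra n A using assms by unfold_locales
  show "bij_betw (eta A) (hom A (PL n)) (dlhom A)" by (rule bij_betw_eta)
  show "homeomorphic_map (Dn_top n A) (D_top A) (eta A)" by (rule homeomorphic_map_eta)
  fix u v assume "u \<in> hom A (PL n)" "v \<in> hom A (PL n)"
  then show "(\<forall>a\<in>pcarrier A. u a \<le> v a) \<longleftrightarrow> (\<forall>a\<in>skel A. eta A u a \<le> eta A v a)" by (rule eta_le_iff)
next
  fix A :: "'a pmv_alg" and B :: "'b pmv_alg" and h u
  assume "h \<in> hom A B"
  then show "eta A (Dn_mor A h u) = DS_mor A h (eta B u)" by (rule eta_natural)
qed

end
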